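(* Let $\lambda$ be a positive integer with $\gcd(\lambda,n)=1$ and let $1\le j\le n-1$. Then $A/R_jA\cong A/R_{\lambda j}A$ as graded $\Bbbk$-vector spaces; equivalently $\bar e_jE\cong\bar e_{\lambda j}E$ as graded vector spaces. In particular, if $n$ is prime then $\bar e_1E\cong\bar e_jE$ for all $j=2,\dots,n-1$.
   Context: $\Bbbk$ is an algebraically closed field of characteristic zero, $n\ge2$, $A=\Bbbk_{-1}[x_0,\dots,x_{n-1}]$ is generated by degree-one $x_0,\dots,x_{n-1}$ with $x_ix_j=-x_jx_i$ ($i\ne j$), $C_n=\langle\sigma\rangle$ acts by $\sigma(x_i)=x_{i+1}$ (indices in $\mathbb{Z}_n$). Let $\omega$ be a primitive $n$th root of unity and $R_j=\{a\in A\mid\sigma(a)=\omega^{-j}a\}$ for $j\in\mathbb{Z}_n$; $R_jA$ is the right ideal generated by $R_j$. $E=(A\#C_n)/(e_0)$ where $e_0=\frac1n\sum_{g\in C_n}g$, $e_\alpha=\frac1n\sum_{i=0}^{n-1}(\omega^\alpha\sigma)^i$, and $\bar e_j$ is the image of $e_j$ in $E$. *)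

theory Defs
  imports "HOL-Computational_Algebra.Polynomial" "HOL-Library.Function_Algebras"
begin

text \<open>Concrete model of the skew polynomial ring A = k_{-1}[x_0,...,x_{n-1}].
  A monomial x_0^{a_0} ... x_{n-1}^{a_{n-1}} (in this fixed order) is an exponent
  vector a :: nat => nat with a i = 0 for i >= n.  An element of A is a finitely
  supported coefficient function on monomials.\<close>

definition alg_closed :: "'k::field itself \<Rightarrow> bool" where
  "alg_closed _ = (\<forall>p::'k poly. degree p \<ge> 1 \<longrightarrow> (\<exists>x. poly p x = 0))"

definition mons :: "nat \<Rightarrow> (nat \<Rightarrow> nat) set" where
  "mons n = {a. \<forall>i\<ge>n. a i = 0}"

definition Aset :: "nat \<Rightarrow> ((nat \<Rightarrow> nat) \<Rightarrow> 'k::field) set" where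
  "Aset n = {f. finite {a. f a \<noteq> 0} \<and> (\<forall>a. f a \<noteq> 0 \<longrightarrow> a \<in> mons n)}"

definition mdeg :: "nat \<Rightarrow> (nat \<Rightarrow> nat) \<Rightarrow> nat" where
  "mdeg n a = (\<Sum>i<n. a i)"

definition homog :: "nat \<Rightarrow> nat \<Rightarrow> ((nat \<Rightarrow> nat) \<Rightarrow> 'k::field) \<Rightarrow> bool" where
  "homog n d f = (\<forall>a. f a \<noteq> 0 \<longrightarrow> mdeg n a = d)"

text \<open>x^a * x^b = tw a b * x^(a+b), from x_i x_j = - x_j x_i (i \<noteq> j).\<close>
definition tw :: "nat \<Rightarrow> (nat \<Rightarrow> nat) \<Rightarrow> (nat \<Rightarrow> nat) \<Rightarrow> 'k::field" where
  "tw n a b = (-1) ^ (\<Sum>i<n. \<Sum>j<i. a i * b j)"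

definition amult :: "nat \<Rightarrow> ((nat \<Rightarrow> nat) \<Rightarrow> 'k::field) \<Rightarrow> ((nat \<Rightarrow> nat) \<Rightarrow> 'k) \<Rightarrow> ((nat \<Rightarrow> nat) \<Rightarrow> 'k)" where
  "amult n f g = (\<lambda>c. if c \<in> mons n then
      (\<Sum>a\<in>{a\<in>mons n. \<forall>i. a i \<le> c i}. tw n a (\<lambda>i. c i - a i) * f a * g (\<lambda>i. c i - a i))
    else 0)"

definition oneA :: "(nat \<Rightarrow> nat) \<Rightarrow> 'k::field" where
  "oneA = (\<lambda>m. if m = (\<lambda>_. 0) then 1 else 0)"

text \<open>The automorphism sigma(x_i) = x_{i+1}: sigma(x^a) = sgn_shift a * x^c where
  c_{(i+1) mod n} = a_i; the sign comes from moving x_0^{a_{n-1}} to the front.\<close>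
definition sgn_shift :: "nat \<Rightarrow> (nat \<Rightarrow> nat) \<Rightarrow> 'k::field" where
  "sgn_shift n a = (-1) ^ (a (n - 1) * (\<Sum>i<n - 1. a i))"

definition unshift :: "nat \<Rightarrow> (nat \<Rightarrow> nat) \<Rightarrow> (nat \<Rightarrow> nat)" where
  "unshift n c = (\<lambda>i. if i < n then c ((i + 1) mod n) else 0)"

definition asigma :: "nat \<Rightarrow> ((nat \<Rightarrow> nat) \<Rightarrow> 'k::field) \<Rightarrow> ((nat \<Rightarrow> nat) \<Rightarrow> 'k)" where
  "asigma n f = (\<lambda>c. if c \<in> mons n then sgn_shift n (unshift n c) * f (unshift n c) else 0)"

definition Rj :: "nat \<Rightarrow> 'k::field \<Rightarrow> nat \<Rightarrow> ((nat \<Rightarrow> nat) \<Rightarrow> 'k) set" where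
  "Rj n \<omega> j = {f \<in> Aset n. asigma n f = (\<lambda>m. (inverse \<omega>) ^ j * f m)}"

definition RjA :: "nat \<Rightarrow> 'k::field \<Rightarrow> nat \<Rightarrow> ((nat \<Rightarrow> nat) \<Rightarrow> 'k) set" where
  "RjA n \<omega> j = {sum_list (map (\<lambda>(r, a). amult n r a) ps) | ps. set ps \<subseteq> Rj n \<omega> j \<times> Aset n}"

definition smulA :: "'k::field \<Rightarrow> ((nat \<Rightarrow> nat) \<Rightarrow> 'k) \<Rightarrow> ((nat \<Rightarrow> nat) \<Rightarrow> 'k)" where
  "smulA c f = (\<lambda>m. c * f m)"

text \<open>Smash product A # C_n: u represents sum_{g<n} (u g) sigma^g.\<close>
definition Sset :: "nat \<Rightarrow> (nat \<Rightarrow> (nat \<Rightarrow> nat) \<Rightarrow> 'k::field) set" where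
  "Sset n = {u. (\<forall>g. u g \<in> Aset n) \<and> (\<forall>g\<ge>n. u g = 0)}"

definition smult :: "nat \<Rightarrow> (nat \<Rightarrow> (nat \<Rightarrow> nat) \<Rightarrow> 'k::field) \<Rightarrow> (nat \<Rightarrow> (nat \<Rightarrow> nat) \<Rightarrow> 'k) \<Rightarrow> (nat \<Rightarrow> (nat \<Rightarrow> nat) \<Rightarrow> 'k)" where
  "smult n u v = (\<lambda>k. if k < n then
      (\<Sum>g<n. amult n (u g) ((asigma n ^^ g) (v ((k + n - g) mod n))))
    else 0)"

definition smulS :: "'k::field \<Rightarrow> (nat \<Rightarrow> (nat \<Rightarrow> nat) \<Rightarrow> 'k) \<Rightarrow> (nat \<Rightarrow> (nat \<Rightarrow> nat) \<Rightarrow> 'k)" where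
  "smulS c u = (\<lambda>g m. c * u g m)"

definition homogS :: "nat \<Rightarrow> nat \<Rightarrow> (nat \<Rightarrow> (nat \<Rightarrow> nat) \<Rightarrow> 'k::field) \<Rightarrow> bool" where
  "homogS n d u = (\<forall>g. homog n d (u g))"

text \<open>e_alpha = (1/n) sum_{i<n} (omega^alpha sigma)^i.\<close>
definition eidem :: "nat \<Rightarrow> 'k::field \<Rightarrow> nat \<Rightarrow> (nat \<Rightarrow> (nat \<Rightarrow> nat) \<Rightarrow> 'k)" where
  "eidem n \<omega> \<alpha> = (\<lambda>g m. if g < n then (1 / of_nat n) * \<omega> ^ (\<alpha> * g) * oneA m else 0)"

definition Ie0 :: "nat \<Rightarrow> 'k::field \<Rightarrow> (nat \<Rightarrow> (nat \<Rightarrow> nat) \<Rightarrow> 'k) set" where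
  "Ie0 n \<omega> = {sum_list (map (\<lambda>(u, v). smult n (smult n u (eidem n \<omega> 0)) v) ps) | ps.
                set ps \<subseteq> Sset n \<times> Sset n}"

text \<open>e_j (A # C_n); its image in E is ebar_j E = e_j(A#C_n) / (e_j(A#C_n) \<inter> (e_0)).\<close>
definition eS :: "nat \<Rightarrow> 'k::field \<Rightarrow> nat \<Rightarrow> (nat \<Rightarrow> (nat \<Rightarrow> nat) \<Rightarrow> 'k) set" where
  "eS n \<omega> j = {smult n (eidem n \<omega> j) u | u. u \<in> Sset n}"

text \<open>Isomorphism of graded vector spaces D/U \<cong> D'/U' (U, U' graded subspaces):
  a degree-preserving linear map D \<rightarrow> D' inducing a bijection of the quotients.\<close>
definition graded_quot_iso ::
  "(nat \<Rightarrow> 'v::ab_group_add \<Rightarrow> bool) \<Rightarrow> ('k::field \<Rightarrow> 'v \<Rightarrow> 'v) \<Rightarrow> 'v set \<Rightarrow> 'v set \<Rightarrow> 'v set \<Rightarrow> 'v set \<Rightarrow> bool" where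
  "graded_quot_iso H sm D U D' U' =
    (\<exists>\<phi>. (\<forall>x\<in>D. \<phi> x \<in> D')
       \<and> (\<forall>x\<in>D. \<forall>y\<in>D. \<phi> (x + y) = \<phi> x + \<phi> y)
       \<and> (\<forall>c. \<forall>x\<in>D. \<phi> (sm c x) = sm c (\<phi> x))
       \<and> (\<forall>x\<in>D. \<forall>d. H d x \<longrightarrow> H d (\<phi> x))
       \<and> (\<forall>x\<in>D. \<phi> x \<in> U' \<longleftrightarrow> x \<in> U)
       \<and> (\<forall>y\<in>D'. \<exists>x\<in>D. y - \<phi> x \<in> U'))"

end

theory Submission
  imports Defs
begin

text \<open>Let l*m = 1 (mod n). Relabelling the variables by x_i \<mapsto> x_(m*i), with the signs
  forced by the anticommutation rule, is a graded algebra automorphism \<phi> of A; that the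
  signs are compatible with the multiplication is a cocycle identity for the inversions of
  a permutation. Since \<sigma> \<circ> \<phi> = \<phi> \<circ> \<sigma>^l, the automorphism \<phi> maps the eigenspace R_j
  onto R_(l*j), hence R_j A onto R_(l*j) A. Extended to A # C_n by \<sigma> \<mapsto> \<sigma>^m it fixes
  e_0, hence the ideal (e_0), and sends e_j to e_(l*j); this gives e_j E \<cong> e_(l*j) E.
  For n prime every i with 0 < i < n is a unit modulo n.\<close>

section \<open>Permutations of the variables\<close>

definition inv_perms :: "nat \<Rightarrow> (nat \<Rightarrow> nat) \<Rightarrow> (nat \<Rightarrow> nat) \<Rightarrow> bool" where
  "inv_perms n p q = (\<forall>i<n. p i < n \<and> q i < n \<and> p (q i) = i \<and> q (p i) = i)"

definition mon_perm :: "nat \<Rightarrow> (nat \<Rightarrow> nat) \<Rightarrow> (nat \<Rightarrow> nat) \<Rightarrow> (nat \<Rightarrow> nat)" where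
  "mon_perm n c p = (\<lambda>i. if i < n then c (p i) else 0)"

text \<open>(-1)^(perm_sign_exp n p a) is the sign acquired by reordering the product
  x_(p 0)^(a 0) \<cdots> x_(p (n-1))^(a (n-1)) into increasing order of the variables.\<close>
definition perm_sign_exp :: "nat \<Rightarrow> (nat \<Rightarrow> nat) \<Rightarrow> (nat \<Rightarrow> nat) \<Rightarrow> nat" where
  "perm_sign_exp n p a = (\<Sum>i<n. \<Sum>k<n. if i < k \<and> p k < p i then a i * a k else 0)"

text \<open>The algebra endomorphism of A with x_i \<mapsto> x_(p i).\<close>
definition var_perm :: "nat \<Rightarrow> (nat \<Rightarrow> nat) \<Rightarrow> ((nat \<Rightarrow> nat) \<Rightarrow> 'k::field) \<Rightarrow> ((nat \<Rightarrow> nat) \<Rightarrow> 'k)" where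
  "var_perm n p f = (\<lambda>c. if c \<in> mons n then (-1) ^ perm_sign_exp n p (mon_perm n c p) * f (mon_perm n c p) else 0)"

lemma mon_perm_mons [simp]: "mon_perm n c p \<in> mons n"
  by (simp add: mon_perm_def mons_def)

lemma inv_perms_sym: "inv_perms n p q \<Longrightarrow> inv_perms n q p"
  by (auto simp: inv_perms_def)

lemma inv_perms_comp: "inv_perms n p p' \<Longrightarrow> inv_perms n q q' \<Longrightarrow> inv_perms n (\<lambda>i. p (q i)) (\<lambda>i. q' (p' i))"
  by (auto simp: inv_perms_def)

lemma inv_perms_bij: "inv_perms n p q \<Longrightarrow> bij_betw p {..<n} {..<n}"
  by (rule bij_betw_byWitness[where f'=q]) (auto simp: inv_perms_def)

lemma inv_perms_inj: "inv_perms n p q \<Longrightarrow> i < n \<Longrightarrow> k < n \<Longrightarrow> i \<noteq> k \<Longrightarrow> p i \<noteq> p k"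
  by (metis inv_perms_def)

lemma mon_perm_mon_perm: "\<forall>i<n. q i < n \<Longrightarrow> mon_perm n (mon_perm n c p) q = mon_perm n c (\<lambda>i. p (q i))"
  by (auto simp: mon_perm_def)

lemma mon_perm_id: "c \<in> mons n \<Longrightarrow> \<forall>i<n. p i = i \<Longrightarrow> mon_perm n c p = c"
  by (auto simp: mon_perm_def mons_def)

lemma mon_perm_inv: "inv_perms n p q \<Longrightarrow> c \<in> mons n \<Longrightarrow> mon_perm n (mon_perm n c p) q = c"
  by (subst mon_perm_mon_perm) (auto simp: inv_perms_def intro!: mon_perm_id)

lemma mdeg_mon_perm: "inv_perms n p q \<Longrightarrow> mdeg n (mon_perm n c p) = mdeg n c"
  unfolding mdeg_def mon_perm_def using sum.reindex_bij_betw[OF inv_perms_bij, of n p q c] by simp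

lemma var_perm_cong: "\<forall>i<n. p i = q i \<Longrightarrow> var_perm n p = var_perm n q"
proof -
  assume pq: "\<forall>i<n. p i = q i"
  then have "mon_perm n c p = mon_perm n c q" for c
    by (auto simp: mon_perm_def)
  moreover have "perm_sign_exp n p a = perm_sign_exp n q a" for a
    unfolding perm_sign_exp_def using pq by (intro sum.cong refl) auto
  ultimately show ?thesis
    unfolding var_perm_def by (intro ext) simp
qed

lemma var_perm_id: "\<forall>i<n. p i = i \<Longrightarrow> \<forall>c. c \<notin> mons n \<longrightarrow> f c = 0 \<Longrightarrow> var_perm n p f = f"
proof -
  assume "\<forall>i<n. p i = i"
  then have "perm_sign_exp n p a = 0" for a
    unfolding perm_sign_exp_def by (intro sum.neutral ballI) auto
  moreover assume "\<forall>c. c \<notin> mons n \<longrightarrow> f c = 0"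
  ultimately show ?thesis using \<open>\<forall>i<n. p i = i\<close> by (intro ext) (auto simp: var_perm_def mon_perm_id)
qed

section \<open>The sign cocycle: var_perm is multiplicative\<close>

lemma double_sum_symmetrize:
  fixes g :: "nat \<Rightarrow> nat \<Rightarrow> 'a::comm_semiring_1"
  shows "2 * (\<Sum>i<n. \<Sum>k<n. g i k) = (\<Sum>i<n. \<Sum>k<n. g i k + g k i)"
proof -
  have "(\<Sum>i<n. \<Sum>k<n. g k i) = (\<Sum>i<n. \<Sum>k<n. g i k)" by (rule sum.swap)
  thus ?thesis by (simp add: sum.distrib mult_2)
qed

lemma double_sum_reindex:
  assumes "inv_perms n q q'"
  shows "(\<Sum>i<n. \<Sum>k<n. g i k) = (\<Sum>i<n. \<Sum>k<n. g (q i) (q k))"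
proof -
  have b: "bij_betw q {..<n} {..<n}" using inv_perms_bij[OF assms] .
  have "(\<Sum>i<n. \<Sum>k<n. g (q i) (q k)) = (\<Sum>i<n. \<Sum>k<n. g (q i) k)"
    by (intro sum.cong refl sum.reindex_bij_betw[OF b])
  also have "\<dots> = (\<Sum>i<n. \<Sum>k<n. g i k)"
    by (rule sum.reindex_bij_betw[OF b, where g = "\<lambda>i. \<Sum>k<n. g i k"])
  finally show ?thesis by simp
qed

text \<open>A pair of positions is inverted by p \<circ> q iff it is inverted by exactly one of q and p
  (the latter applied after q); the pairs inverted by both are counted twice on the left.\<close>
lemma perm_sign_exp_comp:
  assumes P: "inv_perms n p p'" and Q: "inv_perms n q q'"
  shows "perm_sign_exp n p b + perm_sign_exp n q (mon_perm n b q) = perm_sign_exp n (\<lambda>i. p (q i)) (mon_perm n b q)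
     + 2 * (\<Sum>i<n. \<Sum>k<n. if i < k \<and> q k < q i \<and> p (q i) < p (q k) then mon_perm n b q i * mon_perm n b q k else 0)"
  (is "?A + ?B = ?C + 2 * ?F")
proof -
  define x where "x = mon_perm n b q"
  have xq: "\<And>i. i < n \<Longrightarrow> b (q i) = x i" by (simp add: x_def mon_perm_def)
  define gA where "gA = (\<lambda>i k. if q i < q k \<and> p (q k) < p (q i) then x i * x k else 0)"
  define gB where "gB = (\<lambda>i k. if i < k \<and> q k < q i then x i * x k else 0)"
  define gC where "gC = (\<lambda>i k. if i < k \<and> p (q k) < p (q i) then x i * x k else 0)"
  define gF where "gF = (\<lambda>i k. if i < k \<and> q k < q i \<and> p (q i) < p (q k) then x i * x k else 0)"
  have A: "?A = (\<Sum>i<n. \<Sum>k<n. gA i k)"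
    unfolding perm_sign_exp_def
    by (subst double_sum_reindex[OF Q]) (intro sum.cong refl, simp add: gA_def xq)
  have B: "?B = (\<Sum>i<n. \<Sum>k<n. gB i k)" unfolding perm_sign_exp_def gB_def x_def ..
  have C: "?C = (\<Sum>i<n. \<Sum>k<n. gC i k)" unfolding perm_sign_exp_def gC_def x_def ..
  have F: "?F = (\<Sum>i<n. \<Sum>k<n. gF i k)" unfolding gF_def x_def ..
  have pw: "gA i k + gA k i + (gB i k + gB k i) = gC i k + gC k i + 2 * (gF i k + gF k i)"
    if "i < n" "k < n" for i k
  proof -
    have q1: "i \<noteq> k \<Longrightarrow> q i \<noteq> q k" using inv_perms_inj[OF Q] that by blast
    have q2: "i \<noteq> k \<Longrightarrow> p (q i) \<noteq> p (q k)" using inv_perms_inj[OF P, of "q i" "q k"] q1 Q that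
      by (simp add: inv_perms_def)
    have c: "x k * x i = x i * x k" by simp
    show ?thesis
    proof (cases "i < k")
      case True
      then show ?thesis using q1 q2 unfolding gA_def gB_def gC_def gF_def c
        by (cases "q i < q k"; cases "p (q i) < p (q k)") auto
    next
      case False
      then show ?thesis using q1 q2 unfolding gA_def gB_def gC_def gF_def c
        by (cases "i = k"; cases "q i < q k"; cases "p (q i) < p (q k)") auto
    qed
  qed
  have "2 * (?A + ?B) = 2 * (?C + 2 * ?F)"
  proof -
    have "2 * (?A + ?B) = 2 * (\<Sum>i<n. \<Sum>k<n. gA i k) + 2 * (\<Sum>i<n. \<Sum>k<n. gB i k)"
      using A B by simp
    also have "\<dots> = (\<Sum>i<n. \<Sum>k<n. gA i k + gA k i + (gB i k + gB k i))"
      by (simp only: double_sum_symmetrize sum.distrib[symmetric])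
    also have "\<dots> = (\<Sum>i<n. \<Sum>k<n. gC i k + gC k i + 2 * (gF i k + gF k i))"
      by (intro sum.cong refl pw) auto
    also have "\<dots> = 2 * (\<Sum>i<n. \<Sum>k<n. gC i k) + 2 * (2 * (\<Sum>i<n. \<Sum>k<n. gF i k))"
      using double_sum_symmetrize[where g=gC and n=n] double_sum_symmetrize[where g=gF and n=n] by (simp add: sum.distrib sum_distrib_left)
    finally show ?thesis using C F by simp
  qed
  thus ?thesis by simp
qed

lemma neg_one_power_add_even: "((-1::'a::ring_1) ^ (a + 2 * f)) = (-1) ^ a"
  by (simp add: power_add power_mult)

lemma perm_sign_comp:
  assumes P: "inv_perms n p p'" and Q: "inv_perms n q q'"
  shows "(-1::'k::field) ^ perm_sign_exp n p b * (-1) ^ perm_sign_exp n q (mon_perm n b q) = (-1) ^ perm_sign_exp n (\<lambda>i. p (q i)) (mon_perm n b q)"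
  by (simp only: power_add[symmetric] perm_sign_exp_comp[OF P Q] neg_one_power_add_even)

lemma var_perm_comp:
  assumes P: "inv_perms n p p'" and Q: "inv_perms n q q'"
  shows "var_perm n p (var_perm n q f) = var_perm n (\<lambda>i. p (q i)) f"
proof (rule ext)
  fix c
  have qn: "\<forall>i<n. q i < n" using Q by (simp add: inv_perms_def)
  show "var_perm n p (var_perm n q f) c = var_perm n (\<lambda>i. p (q i)) f c"
    unfolding var_perm_def using perm_sign_comp[OF P Q, of "mon_perm n c p", where 'k='a]
    by (simp add: mon_perm_mon_perm[OF qn] mult.assoc[symmetric])
qed

lemma var_perm_inv:
  assumes P: "inv_perms n p q" and f: "\<forall>c. c \<notin> mons n \<longrightarrow> f c = 0"
  shows "var_perm n q (var_perm n p f) = f"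
proof -
  have "var_perm n (\<lambda>i. q (p i)) f = f" using P by (intro var_perm_id f) (simp add: inv_perms_def)
  moreover have "var_perm n q (var_perm n p f) = var_perm n (\<lambda>i. q (p i)) f" by (rule var_perm_comp[OF inv_perms_sym[OF P] P])
  ultimately show ?thesis by simp
qed

lemma sum_triangle_as_square: "(\<Sum>i<n. \<Sum>j<i. f i j) = (\<Sum>i<n. \<Sum>k<n. if k < i then f i k else 0)"
  for f :: "nat \<Rightarrow> nat \<Rightarrow> 'a::comm_monoid_add"
proof (rule sum.cong[OF refl])
  fix i assume "i \<in> {..<n}"
  hence e: "{..<i} = {k\<in>{..<n}. k < i}" by auto
  thus "(\<Sum>j<i. f i j) = (\<Sum>k<n. if k < i then f i k else 0)"
    using sum.inter_filter[of "{..<n}" "f i" "\<lambda>k. k<i"] e by simp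
qed

text \<open>The exponent form of the identity behind multiplicativity: relabelling x^a x^b, the
  reordering signs of the two factors together with the twist of the product agree with the
  reordering sign of the product and the twist of the relabelled factors, up to an even term.\<close>
lemma perm_sign_exp_tw:
  fixes a b :: "nat \<Rightarrow> nat"
  assumes P: "inv_perms n p p'"
  defines "x \<equiv> mon_perm n a p" and "y \<equiv> mon_perm n b p"
  shows "(\<Sum>i<n. \<Sum>j<i. a i * b j) + perm_sign_exp n p x + perm_sign_exp n p y
     + 2 * (\<Sum>i<n. \<Sum>k<n. if k < i \<and> p i < p k then x i * y k else 0)
   = perm_sign_exp n p (\<lambda>i. x i + y i) + (\<Sum>i<n. \<Sum>j<i. x i * y j)"
proof -
  have xp: "\<And>i. i < n \<Longrightarrow> a (p i) = x i" "\<And>i. i < n \<Longrightarrow> b (p i) = y i"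
    by (simp_all add: x_def y_def mon_perm_def)
  define gT where "gT = (\<lambda>i k. if p k < p i then x i * y k else 0)"
  define g1 where "g1 = (\<lambda>i k. if i < k \<and> p k < p i then x i * x k else 0)"
  define g2 where "g2 = (\<lambda>i k. if i < k \<and> p k < p i then y i * y k else 0)"
  define gG where "gG = (\<lambda>i k. if k < i \<and> p i < p k then x i * y k else 0)"
  define gM1 where "gM1 = (\<lambda>i k. if i < k \<and> p k < p i then x i * y k else 0)"
  define gM2 where "gM2 = (\<lambda>i k. if i < k \<and> p k < p i then y i * x k else 0)"
  define gK where "gK = (\<lambda>i k. if k < i then x i * y k else 0)"
  have T: "(\<Sum>i<n. \<Sum>j<i. a i * b j) = (\<Sum>i<n. \<Sum>k<n. gT i k)"
    unfolding sum_triangle_as_square by (subst double_sum_reindex[OF P]) (intro sum.cong refl, simp add: gT_def xp)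
  have E: "perm_sign_exp n p (\<lambda>i. x i + y i) = (\<Sum>i<n. \<Sum>k<n. g1 i k + g2 i k + gM1 i k + gM2 i k)"
    unfolding perm_sign_exp_def g1_def g2_def gM1_def gM2_def
    by (intro sum.cong refl) (simp add: algebra_simps)
  have M2: "(\<Sum>i<n. \<Sum>k<n. gM2 i k) = (\<Sum>i<n. \<Sum>k<n. gM2 k i)" by (rule sum.swap)
  have K: "(\<Sum>i<n. \<Sum>j<i. x i * y j) = (\<Sum>i<n. \<Sum>k<n. gK i k)" unfolding sum_triangle_as_square gK_def ..
  have pw: "gT i k + 2 * gG i k = gK i k + gM1 i k + gM2 k i" if "i < n" "k < n" for i k
  proof -
    have q: "i \<noteq> k \<Longrightarrow> p i \<noteq> p k" using inv_perms_inj[OF P] that by blast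
    have c: "y k * x i = x i * y k" by simp
    show ?thesis unfolding gT_def gG_def gK_def gM1_def gM2_def c using q
      by (cases "i < k"; cases "k < i"; cases "p i < p k") auto
  qed
  have "(\<Sum>i<n. \<Sum>k<n. gT i k) + 2 * (\<Sum>i<n. \<Sum>k<n. gG i k)
      = (\<Sum>i<n. \<Sum>k<n. gK i k) + (\<Sum>i<n. \<Sum>k<n. gM1 i k) + (\<Sum>i<n. \<Sum>k<n. gM2 k i)"
  proof -
    have "(\<Sum>i<n. \<Sum>k<n. gT i k + 2 * gG i k) = (\<Sum>i<n. \<Sum>k<n. gK i k + gM1 i k + gM2 k i)"
      by (intro sum.cong refl pw) auto
    thus ?thesis by (simp add: sum.distrib sum_distrib_left)
  qed
  moreover have "perm_sign_exp n p (\<lambda>i. x i + y i) = perm_sign_exp n p x + perm_sign_exp n p y + (\<Sum>i<n. \<Sum>k<n. gM1 i k) + (\<Sum>i<n. \<Sum>k<n. gM2 i k)"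
    by (subst E) (simp add: perm_sign_exp_def g1_def g2_def sum.distrib)
  ultimately show ?thesis using T K M2 unfolding gG_def by simp
qed

lemma tw_perm_sign:
  assumes P: "inv_perms n p p'"
  shows "tw n a b * (-1) ^ perm_sign_exp n p (mon_perm n a p) * (-1) ^ perm_sign_exp n p (mon_perm n b p)
       = ((-1::'k::field) ^ perm_sign_exp n p (\<lambda>i. mon_perm n a p i + mon_perm n b p i)) * tw n (mon_perm n a p) (mon_perm n b p)"
proof -
  have "(-1::'k) ^ ((\<Sum>i<n. \<Sum>j<i. a i * b j) + perm_sign_exp n p (mon_perm n a p) + perm_sign_exp n p (mon_perm n b p)
     + 2 * (\<Sum>i<n. \<Sum>k<n. if k < i \<and> p i < p k then mon_perm n a p i * mon_perm n b p k else 0))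
     = (-1) ^ (perm_sign_exp n p (\<lambda>i. mon_perm n a p i + mon_perm n b p i) + (\<Sum>i<n. \<Sum>j<i. mon_perm n a p i * mon_perm n b p j))"
    by (subst perm_sign_exp_tw[OF P]) (rule refl)
  thus ?thesis unfolding tw_def by (simp add: power_add power_mult)
qed

definition mon_below :: "nat \<Rightarrow> (nat \<Rightarrow> nat) \<Rightarrow> (nat \<Rightarrow> nat) set" where
  "mon_below n c = {a \<in> mons n. \<forall>i. a i \<le> c i}"

lemma amult_mon_below: "amult n f g = (\<lambda>c. if c \<in> mons n then
      (\<Sum>a\<in>mon_below n c. tw n a (\<lambda>i. c i - a i) * f a * g (\<lambda>i. c i - a i)) else 0)"
  unfolding amult_def mon_below_def ..

lemma mon_perm_bij_mon_below:
  assumes P: "inv_perms n p q" and c: "c \<in> mons n"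
  shows "bij_betw (\<lambda>a. mon_perm n a p) (mon_below n c) (mon_below n (mon_perm n c p))"
proof (rule bij_betw_byWitness[where f' = "\<lambda>a. mon_perm n a q"])
  have pn: "\<forall>i<n. p i < n" and qn: "\<forall>i<n. q i < n" using P by (auto simp: inv_perms_def)
  show "\<forall>a\<in>mon_below n c. mon_perm n (mon_perm n a p) q = a"
    using P by (auto simp: mon_perm_mon_perm[OF qn] mon_below_def inv_perms_def intro!: mon_perm_id)
  show "\<forall>a\<in>mon_below n (mon_perm n c p). mon_perm n (mon_perm n a q) p = a"
    using P by (auto simp: mon_perm_mon_perm[OF pn] mon_below_def inv_perms_def intro!: mon_perm_id)
  show "(\<lambda>a. mon_perm n a p) ` mon_below n c \<subseteq> mon_below n (mon_perm n c p)"
    by (auto simp: mon_below_def mon_perm_def mons_def)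
  show "(\<lambda>a. mon_perm n a q) ` mon_below n (mon_perm n c p) \<subseteq> mon_below n c"
  proof
    fix a' assume "a' \<in> (\<lambda>a. mon_perm n a q) ` mon_below n (mon_perm n c p)"
    then obtain a where a: "a \<in> mon_below n (mon_perm n c p)" and a': "a' = mon_perm n a q" by auto
    have "a' i \<le> c i" for i
    proof (cases "i < n")
      case True
      have qi: "q i < n" "p (q i) = i" using P True by (auto simp: inv_perms_def)
      have "a (q i) \<le> mon_perm n c p (q i)" using a by (simp add: mon_below_def)
      hence "a (q i) \<le> c (p (q i))" using qi by (simp add: mon_perm_def)
      with True P a' show ?thesis by (auto simp: mon_perm_def inv_perms_def)
    next
      case False thus ?thesis using a' by (simp add: mon_perm_def)
    qed
    thus "a' \<in> mon_below n c" by (simp add: mon_below_def a')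
  qed
qed

lemma var_perm_amult:
  assumes P: "inv_perms n p q"
  shows "var_perm n p (amult n f g) = amult n (var_perm n p f) (var_perm n p (g :: _ \<Rightarrow> 'k::field))"
proof (rule ext)
  fix c
  show "var_perm n p (amult n f g) c = amult n (var_perm n p f) (var_perm n p g) c"
  proof (cases "c \<in> mons n")
    case False thus ?thesis by (simp add: var_perm_def amult_mon_below)
  next
    case c: True
    define c' where "c' = mon_perm n c p"
    have sub: "mon_perm n (\<lambda>i. c i - a i) p = (\<lambda>i. c' i - mon_perm n a p i)" for a
      by (auto simp: mon_perm_def c'_def)
    have add: "(\<lambda>i. mon_perm n a p i + mon_perm n (\<lambda>i. c i - a i) p i) = c'" if "a \<in> mon_below n c" for a
      using that by (auto simp: mon_perm_def c'_def mon_below_def)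
    have dm: "(\<lambda>i. c i - a i) \<in> mons n" for a using c by (simp add: mons_def)
    have "var_perm n p (amult n f g) c = (-1) ^ perm_sign_exp n p c' *
        (\<Sum>a\<in>mon_below n c'. tw n a (\<lambda>i. c' i - a i) * f a * g (\<lambda>i. c' i - a i))"
      using c by (simp add: var_perm_def amult_mon_below c'_def)
    also have "\<dots> = (-1) ^ perm_sign_exp n p c' *
        (\<Sum>a\<in>mon_below n c. tw n (mon_perm n a p) (\<lambda>i. c' i - mon_perm n a p i) * f (mon_perm n a p) * g (\<lambda>i. c' i - mon_perm n a p i))"
      using sum.reindex_bij_betw[OF mon_perm_bij_mon_below[OF P c], of "\<lambda>a. tw n a (\<lambda>i. c' i - a i) * f a * g (\<lambda>i. c' i - a i)"]
      by (simp add: c'_def)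
    also have "\<dots> = (\<Sum>a\<in>mon_below n c. tw n a (\<lambda>i. c i - a i) * var_perm n p f a * var_perm n p g (\<lambda>i. c i - a i))"
      unfolding sum_distrib_left
    proof (intro sum.cong refl)
      fix a assume a: "a \<in> mon_below n c"
      have am: "a \<in> mons n" using a by (simp add: mon_below_def)
      have ms: "tw n a (\<lambda>i. c i - a i) * (-1) ^ perm_sign_exp n p (mon_perm n a p) * (-1) ^ perm_sign_exp n p (mon_perm n (\<lambda>i. c i - a i) p)
          = (-1::'k) ^ perm_sign_exp n p c' * tw n (mon_perm n a p) (mon_perm n (\<lambda>i. c i - a i) p)"
        using tw_perm_sign[OF P, of a "\<lambda>i. c i - a i", where 'k='k] add[OF a] by simp
      show "(-1) ^ perm_sign_exp n p c' * (tw n (mon_perm n a p) (\<lambda>i. c' i - mon_perm n a p i) * f (mon_perm n a p) * g (\<lambda>i. c' i - mon_perm n a p i))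
          = tw n a (\<lambda>i. c i - a i) * var_perm n p f a * var_perm n p g (\<lambda>i. c i - a i)"
        using am dm[of a] ms unfolding var_perm_def sub[symmetric]
        by (simp add: algebra_simps)
    qed
    also have "\<dots> = amult n (var_perm n p f) (var_perm n p g) c"
      using c by (simp add: amult_mon_below)
    finally show ?thesis .
  qed
qed

lemma var_perm_add: "var_perm n p (f + g) = var_perm n p f + var_perm n p g"
  by (auto simp: var_perm_def algebra_simps)

lemma var_perm_zero: "var_perm n p 0 = 0"
  by (auto simp: var_perm_def)

lemma var_perm_smul: "var_perm n p (\<lambda>m. c * f m) = (\<lambda>m. c * var_perm n p f m)"
  by (auto simp: var_perm_def algebra_simps)

lemma var_perm_smulA: "var_perm n p (smulA c f) = smulA c (var_perm n p f)"
  unfolding smulA_def by (rule var_perm_smul)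

lemma var_perm_sum: "var_perm n p (sum F S) = (\<Sum>s\<in>S. var_perm n p (F s))"
proof (cases "finite S")
  case True thus ?thesis
  proof (induction S rule: finite_induct)
    case empty show ?case by (simp only: sum.empty var_perm_zero)
  next
    case (insert x S)
    show ?case by (simp only: sum.insert[OF insert.hyps] var_perm_add insert.IH)
  qed
next
  case False thus ?thesis by (simp add: var_perm_zero)
qed

lemma var_perm_Aset:
  assumes P: "inv_perms n p q" and f: "f \<in> Aset n"
  shows "var_perm n p f \<in> Aset n"
proof -
  have "{c. var_perm n p f c \<noteq> 0} \<subseteq> (\<lambda>a. mon_perm n a q) ` {a. f a \<noteq> 0}"
  proof
    fix c assume "c \<in> {c. var_perm n p f c \<noteq> 0}"
    hence c: "c \<in> mons n" "f (mon_perm n c p) \<noteq> 0" by (auto simp: var_perm_def split: if_splits)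
    have "c = mon_perm n (mon_perm n c p) q" using mon_perm_inv[OF P c(1)] by simp
    thus "c \<in> (\<lambda>a. mon_perm n a q) ` {a. f a \<noteq> 0}" using c(2) by blast
  qed
  moreover have "finite {a. f a \<noteq> 0}" using f by (simp add: Aset_def)
  ultimately have "finite {c. var_perm n p f c \<noteq> 0}" by (meson finite_imageI finite_subset)
  moreover have "\<forall>c. var_perm n p f c \<noteq> 0 \<longrightarrow> c \<in> mons n" by (auto simp: var_perm_def)
  ultimately show ?thesis by (simp add: Aset_def)
qed

lemma var_perm_homog: "inv_perms n p q \<Longrightarrow> homog n d f \<Longrightarrow> homog n d (var_perm n p f)"
  unfolding homog_def var_perm_def by (auto simp: mdeg_mon_perm split: if_splits)

lemma var_perm_oneA:
  assumes P: "inv_perms n p q"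
  shows "var_perm n p oneA = oneA"
proof (rule ext)
  fix c
  have z: "(\<lambda>_. 0::nat) \<in> mons n" by (simp add: mons_def)
  show "var_perm n p oneA c = oneA c"
  proof (cases "c \<in> mons n")
    case False
    hence "c \<noteq> (\<lambda>_. 0)" using z by auto
    thus ?thesis using False by (simp add: var_perm_def oneA_def)
  next
    case True
    have "mon_perm n c p = (\<lambda>_. 0) \<longleftrightarrow> c = (\<lambda>_. 0)"
    proof
      assume "mon_perm n c p = (\<lambda>_. 0)"
      hence "mon_perm n (mon_perm n c p) q = mon_perm n (\<lambda>_. 0) q" by simp
      thus "c = (\<lambda>_. 0)" using mon_perm_inv[OF P True] by (simp add: mon_perm_def)
    qed (simp add: mon_perm_def)
    moreover have "perm_sign_exp n p (\<lambda>_. 0) = 0" by (simp add: perm_sign_exp_def)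
    ultimately show ?thesis using True by (auto simp: var_perm_def oneA_def)
  qed
qed

section \<open>The automorphism \<sigma> as a rotation of the variables\<close>

lemma inv_perms_rotate: "n \<ge> 1 \<Longrightarrow> inv_perms n (\<lambda>i. (i + k) mod n) (\<lambda>i. (i + (n - k mod n)) mod n)"
  unfolding inv_perms_def
proof (intro allI impI conjI)
  fix i assume n: "n \<ge> 1" and i: "i < n"
  show "(i + k) mod n < n" "(i + (n - k mod n)) mod n < n" using n by auto
  have km1: "k mod n < n" using n by simp
  have km2: "n * (k div n) + k mod n = k" by simp
  have key: "k + (n - k mod n) = n * (k div n) + n" using km1 km2 by linarith
  have e1: "i + (n - k mod n) + k = i + n * Suc (k div n)" using key by simp
  have e2: "i + k + (n - k mod n) = i + n * Suc (k div n)" using key by simp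
  have "((i + (n - k mod n)) mod n + k) mod n = (i + n * Suc (k div n)) mod n"
    by (simp only: mod_add_left_eq e1)
  also have "\<dots> = i" using i by (simp only: mod_mult_self2 mod_less)
  finally show "((i + (n - k mod n)) mod n + k) mod n = i" .
  have "((i + k) mod n + (n - k mod n)) mod n = (i + n * Suc (k div n)) mod n"
    by (simp only: mod_add_left_eq e2)
  also have "\<dots> = i" using i by (simp only: mod_mult_self2 mod_less)
  finally show "((i + k) mod n + (n - k mod n)) mod n = i" .
qed

lemma sgn_shift_perm_sign:
  assumes n: "n \<ge> 1"
  shows "sgn_shift n a = (-1) ^ perm_sign_exp n (\<lambda>i. (i + 1) mod n) a"
proof -
  have cond: "(i < k \<and> Suc k mod n < Suc i mod n) = (k = n - 1 \<and> i < n - 1)"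
    if "i < n" "k < n" for i k
  proof (cases "k + 1 < n")
    case True thus ?thesis using that by auto
  next
    case False
    hence "k = n - 1" using that by simp
    thus ?thesis using that n by (cases "i + 1 < n") auto
  qed
  have "perm_sign_exp n (\<lambda>i. (i + 1) mod n) a = (\<Sum>i<n. \<Sum>k<n. if k = n - 1 \<and> i < n - 1 then a i * a k else 0)"
    unfolding perm_sign_exp_def by (intro sum.cong refl) (simp add: cond)
  also have "\<dots> = (\<Sum>i<n. if i < n - 1 then a i * a (n - 1) else 0)"
    using n by (intro sum.cong refl) (auto simp: if_distrib sum.delta cong: if_cong)
  also have "\<dots> = (\<Sum>i<n - 1. a i * a (n - 1))"
  proof -
    have e: "{..<n - 1} = {i\<in>{..<n}. i < n - 1}" by auto
    show ?thesis using sum.inter_filter[of "{..<n}" "\<lambda>i. a i * a (n - 1)" "\<lambda>i. i < n - 1"] e by simp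
  qed
  also have "\<dots> = a (n - 1) * (\<Sum>i<n - 1. a i)" by (simp add: sum_distrib_left mult.commute)
  finally show ?thesis unfolding sgn_shift_def by simp
qed

lemma unshift_mon_perm: "unshift n c = mon_perm n c (\<lambda>i. (i + 1) mod n)"
  by (rule ext) (simp add: unshift_def mon_perm_def)

lemma asigma_var_perm: "n \<ge> 1 \<Longrightarrow> asigma n f = var_perm n (\<lambda>i. (i + 1) mod n) f"
  unfolding asigma_def var_perm_def unshift_mon_perm by (simp only: sgn_shift_perm_sign)

lemma asigma_pow_var_perm:
  assumes n: "n \<ge> 1" and Q: "inv_perms n q q'"
  shows "(asigma n ^^ k) (var_perm n q f) = var_perm n (\<lambda>i. (q i + k) mod n) f"
proof (induction k)
  case 0
  have "\<forall>i<n. q i = (q i + 0) mod n" using Q by (simp add: inv_perms_def)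
  from fun_cong[OF var_perm_cong[OF this], of f] show ?case by simp
next
  case (Suc k)
  have Pk: "inv_perms n (\<lambda>i. (q i + k) mod n) (\<lambda>i. q' ((i + (n - k mod n)) mod n))"
    using inv_perms_comp[OF inv_perms_rotate[OF n] Q] .
  have P1: "inv_perms n (\<lambda>i. (i + 1) mod n) (\<lambda>i. (i + (n - 1 mod n)) mod n)" using inv_perms_rotate[OF n] .
  have "(asigma n ^^ Suc k) (var_perm n q f) = asigma n ((asigma n ^^ k) (var_perm n q f))" by simp
  also have "\<dots> = asigma n (var_perm n (\<lambda>i. (q i + k) mod n) f)" by (simp only: Suc.IH)
  also have "\<dots> = var_perm n (\<lambda>i. (i + 1) mod n) (var_perm n (\<lambda>i. (q i + k) mod n) f)"
    by (rule asigma_var_perm[OF n])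
  also have "\<dots> = var_perm n (\<lambda>i. ((q i + k) mod n + 1) mod n) f" by (rule var_perm_comp[OF P1 Pk])
  also have "\<dots> = var_perm n (\<lambda>i. (q i + Suc k) mod n) f"
  proof -
    have "\<forall>i<n. ((q i + k) mod n + 1) mod n = (q i + Suc k) mod n" by (simp add: mod_Suc_eq)
    from fun_cong[OF var_perm_cong[OF this], of f] show ?thesis .
  qed
  finally show ?case .
qed

lemma var_perm_asigma_pow:
  assumes n: "n \<ge> 1" and P: "inv_perms n p p'"
  shows "var_perm n p ((asigma n ^^ k) f) = var_perm n (\<lambda>i. p ((i + k) mod n)) f"
proof (cases k)
  case 0
  have "\<forall>i<n. p i = p ((i + 0) mod n)" by simp
  from fun_cong[OF var_perm_cong[OF this], of f] show ?thesis using 0 by simp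
next
  case (Suc k')
  have P1: "inv_perms n (\<lambda>i. (i + 1) mod n) (\<lambda>i. (i + (n - 1 mod n)) mod n)" using inv_perms_rotate[OF n] .
  have Pk: "inv_perms n (\<lambda>i. ((i + 1) mod n + k') mod n) (\<lambda>i. ((i + (n - k' mod n)) mod n + (n - 1 mod n)) mod n)"
    using inv_perms_comp[OF inv_perms_rotate[OF n] P1] .
  have "(asigma n ^^ k) f = (asigma n ^^ k') (asigma n f)" using Suc by (simp only: funpow_Suc_right o_apply)
  also have "\<dots> = var_perm n (\<lambda>i. ((i + 1) mod n + k') mod n) f"
    by (simp only: asigma_var_perm[OF n] asigma_pow_var_perm[OF n P1])
  finally have "var_perm n p ((asigma n ^^ k) f) = var_perm n (\<lambda>i. p (((i + 1) mod n + k') mod n)) f"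
    using var_perm_comp[OF P Pk] by simp
  also have "\<dots> = var_perm n (\<lambda>i. p ((i + k) mod n)) f"
    using Suc by (intro arg_cong[where f="\<lambda>p. var_perm n p f"] var_perm_cong) (simp add: mod_add_left_eq)
  finally show ?thesis .
qed

lemma asigma_smul: "asigma n (\<lambda>m. c * f m) = (\<lambda>m. c * asigma n f m)"
  by (auto simp: asigma_def algebra_simps)

lemma asigma_pow_eigen:
  assumes "asigma n f = (\<lambda>m. c * f m)"
  shows "(asigma n ^^ k) f = (\<lambda>m. c ^ k * f m)"
  by (induction k) (simp_all add: assms asigma_smul mult.assoc mult.left_commute[of c])

lemma mod_inverse_cancel: "(l * m) mod n = (1::nat) \<Longrightarrow> (m * ((l * i) mod n)) mod n = i mod n"
  by (metis mod_mult_right_eq mod_mult_left_eq mult.assoc mult.commute mult_1)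

lemma mod_inverse_cancel_less: "(l * m) mod n = (1::nat) \<Longrightarrow> i < n \<Longrightarrow> (m * ((l * i) mod n)) mod n = i"
  using mod_inverse_cancel[of l m n i] by simp

lemma mod_inverse_mult_add:
  assumes "(l * m) mod n = (1::nat)"
  shows "(m * ((i + (l * h) mod n) mod n)) mod n = ((m * i) mod n + h) mod n"
proof -
  have "(m * ((i + (l * h) mod n) mod n)) mod n = (m * i + (m * ((l * h) mod n)) mod n) mod n"
    by (simp add: mod_mult_right_eq mod_add_right_eq distrib_left)
  also have "\<dots> = ((m * i) mod n + h) mod n"
    by (simp add: mod_inverse_cancel[OF assms] mod_add_right_eq mod_add_left_eq)
  finally show ?thesis .
qed

lemma mult_mod_diff:
  assumes "h < (n::nat)"
  shows "((l * k) mod n + n - (l * h) mod n) mod n = (l * ((k + n - h) mod n)) mod n"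
proof -
  have le: "(l * h) mod n \<le> (l * k) mod n + n" "h \<le> k + n"
    using assms mod_less_divisor[of n "l * h"] by linarith+
  have "int (((l * k) mod n + n - (l * h) mod n) mod n) = (int l * int k - int l * int h) mod int n"
    using le by (simp add: of_nat_diff zmod_int diff_add_eq[symmetric] mod_diff_left_eq mod_diff_right_eq)
  also have "\<dots> = int ((l * ((k + n - h) mod n)) mod n)"
    using le by (simp add: of_nat_diff zmod_int mod_mult_right_eq right_diff_distrib distrib_left diff_add_eq[symmetric])
  finally show ?thesis by simp
qed

lemma power_eq_if_mod_eq:
  assumes "(x::'a::monoid_mult) ^ n = 1" and "a mod n = b mod n"
  shows "x ^ a = x ^ b"
proof -
  have "x ^ c = x ^ (c mod n)" for c
  proof -
    have "x ^ c = x ^ (n * (c div n) + c mod n)" by simp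
    also have "\<dots> = x ^ (c mod n)" by (simp only: power_add power_mult assms(1) power_one mult_1_left)
    finally show ?thesis .
  qed
  then show ?thesis using assms(2) by metis
qed

lemma inv_perms_mult:
  "(l * m) mod n = (1::nat) \<Longrightarrow> n \<ge> 1 \<Longrightarrow> inv_perms n (\<lambda>i. (m * i) mod n) (\<lambda>i. (l * i) mod n)"
  unfolding inv_perms_def using mod_inverse_cancel_less[of l m n] mod_inverse_cancel_less[of m l n]
  by (auto simp: mult.commute)

lemma mod_inverse_exists:
  assumes "gcd l n = 1" and "n \<ge> (2::nat)"
  obtains m where "(l * m) mod n = 1"
proof -
  have "l \<noteq> 0" using assms by (intro notI) simp
  then obtain x y where "l * x = n * y + gcd l n" using bezout_nat by blast
  then have "(l * x) mod n = 1" using assms by (simp add: Suc_times_mod_eq)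
  then show ?thesis by (rule that)
qed

lemma Aset_vanish: "f \<in> Aset n \<Longrightarrow> c \<notin> mons n \<Longrightarrow> f c = 0"
  by (auto simp: Aset_def)

text \<open>The hypothesis on p says \<sigma> \<circ> \<phi> = \<phi> \<circ> \<sigma>^l for \<phi> = var_perm n p.\<close>
lemma var_perm_Rj:
  assumes n: "n \<ge> 1" and P: "inv_perms n p p'"
    and comm: "\<forall>i<n. (p i + 1) mod n = p ((i + l) mod n)"
    and r: "r \<in> Rj n \<omega> j"
  shows "var_perm n p r \<in> Rj n \<omega> (l * j)"
proof -
  define c where "c = inverse \<omega> ^ j"
  have rA: "r \<in> Aset n" and re: "asigma n r = (\<lambda>m. c * r m)" using r by (auto simp: Rj_def c_def)
  have "asigma n (var_perm n p r) = (asigma n ^^ 1) (var_perm n p r)" by simp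
  also have "\<dots> = var_perm n (\<lambda>i. (p i + 1) mod n) r" by (rule asigma_pow_var_perm[OF n P])
  also have "\<dots> = var_perm n (\<lambda>i. p ((i + l) mod n)) r" using fun_cong[OF var_perm_cong[OF comm], of r] .
  also have "\<dots> = var_perm n p ((asigma n ^^ l) r)" by (rule var_perm_asigma_pow[OF n P, symmetric])
  also have "\<dots> = (\<lambda>m. c ^ l * var_perm n p r m)" by (simp add: asigma_pow_eigen[OF re] var_perm_smul)
  also have "c ^ l = inverse \<omega> ^ (l * j)" by (simp add: c_def power_mult[symmetric] mult.commute)
  finally show ?thesis using var_perm_Aset[OF P rA] by (simp add: Rj_def)
qed

lemma var_perm_amult_sum_list: "inv_perms n p p' \<Longrightarrow> var_perm n p (sum_list (map (\<lambda>(r, a). amult n r a) ps))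
   = sum_list (map (\<lambda>(r, a). amult n r a) (map (\<lambda>(r, a). (var_perm n p r, var_perm n p a)) ps))"
  by (induction ps) (simp_all add: var_perm_zero var_perm_add var_perm_amult split_def)

lemma var_perm_RjA:
  assumes n: "n \<ge> 1" and P: "inv_perms n p p'"
    and comm: "\<forall>i<n. (p i + 1) mod n = p ((i + l) mod n)"
    and x: "x \<in> RjA n \<omega> j"
  shows "var_perm n p x \<in> RjA n \<omega> (l * j)"
proof -
  obtain ps where x: "x = sum_list (map (\<lambda>(r, a). amult n r a) ps)" and ps: "set ps \<subseteq> Rj n \<omega> j \<times> Aset n"
    using x by (auto simp: RjA_def)
  have "set (map (\<lambda>(r, a). (var_perm n p r, var_perm n p a)) ps) \<subseteq> Rj n \<omega> (l * j) \<times> Aset n"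
    using ps by (fastforce intro: var_perm_Rj[OF n P comm] var_perm_Aset[OF P])
  thus ?thesis unfolding RjA_def x var_perm_amult_sum_list[OF P] by blast
qed

lemma var_perm_mult_RjA:
  assumes "n \<ge> 1" and "(l * m) mod n = 1" and "x \<in> RjA n \<omega> j"
  shows "var_perm n (\<lambda>i. (m * i) mod n) x \<in> RjA n \<omega> (l * j)"
proof (rule var_perm_RjA[OF assms(1) inv_perms_mult[OF assms(2,1)] _ assms(3)])
  show "\<forall>i<n. ((m * i) mod n + 1) mod n = (m * ((i + l) mod n)) mod n"
    using mod_inverse_mult_add[OF assms(2), of _ 1] by (simp add: mod_add_right_eq)
qed

lemma RjA_mod_eq:
  assumes "(\<omega>::'k::field) ^ n = 1" and "a mod n = b mod n"
  shows "RjA n \<omega> a = RjA n \<omega> b"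
proof -
  have "inverse \<omega> ^ a = inverse \<omega> ^ b"
    using power_eq_if_mod_eq[of "inverse \<omega>" n a b] assms by (simp add: power_inverse)
  then show ?thesis by (simp add: RjA_def Rj_def)
qed

lemma graded_quot_iso_of_inverse:
  assumes maps: "\<And>x. x \<in> D \<Longrightarrow> \<phi> x \<in> D'" "\<And>y. y \<in> D' \<Longrightarrow> \<psi> y \<in> D"
    and inverse: "\<And>x. x \<in> D \<Longrightarrow> \<psi> (\<phi> x) = x" "\<And>y. y \<in> D' \<Longrightarrow> \<phi> (\<psi> y) = y"
    and add: "\<And>x y. x \<in> D \<Longrightarrow> y \<in> D \<Longrightarrow> \<phi> (x + y) = \<phi> x + \<phi> y"
    and smul: "\<And>c x. x \<in> D \<Longrightarrow> \<phi> (sm c x) = sm c (\<phi> x)"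
    and grading: "\<And>d x. x \<in> D \<Longrightarrow> H d x \<Longrightarrow> H d (\<phi> x)"
    and sub: "\<And>x. x \<in> D \<Longrightarrow> x \<in> U \<Longrightarrow> \<phi> x \<in> U'" "\<And>y. y \<in> D' \<Longrightarrow> y \<in> U' \<Longrightarrow> \<psi> y \<in> U"
    and zero: "0 \<in> U'"
  shows "graded_quot_iso H sm D U D' U'"
  unfolding graded_quot_iso_def
proof (intro exI[of _ \<phi>] conjI ballI allI impI)
  fix x assume x: "x \<in> D"
  show "\<phi> x \<in> U' \<longleftrightarrow> x \<in> U"
    using sub(1)[OF x] sub(2)[OF maps(1)[OF x]] inverse(1)[OF x] by auto
next
  fix y assume "y \<in> D'"
  then show "\<exists>x\<in>D. y - \<phi> x \<in> U'"
    using maps(2) inverse(2) zero by (intro bexI[of _ "\<psi> y"]) auto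
qed (use maps add smul grading in auto)

lemma zero_in_RjA: "0 \<in> RjA n \<omega> j"
  unfolding RjA_def by (rule CollectI, rule exI[of _ "[]"]) simp

lemma graded_quot_iso_RjA:
  fixes \<omega> :: "'k::field"
  assumes n: "n \<ge> 1" and w: "\<omega> ^ n = 1" and lm: "(l * m) mod n = 1"
  shows "graded_quot_iso (homog n) smulA (Aset n) (RjA n \<omega> j) (Aset n) (RjA n \<omega> (l * j))"
proof -
  have ml: "(m * l) mod n = 1" using lm by (simp add: mult.commute)
  note P = inv_perms_mult[OF lm n] and Q = inv_perms_mult[OF ml n]
  have RjA_back: "var_perm n (\<lambda>i. (l * i) mod n) y \<in> RjA n \<omega> j" if "y \<in> RjA n \<omega> (l * j)" for y
    using var_perm_mult_RjA[OF n ml that] RjA_mod_eq[OF w, of "m * (l * j)" j] mod_inverse_cancel[OF lm]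
    by (simp add: mod_mult_right_eq)
  show ?thesis
    by (rule graded_quot_iso_of_inverse[where \<phi> = "var_perm n (\<lambda>i. (m * i) mod n)"
        and \<psi> = "var_perm n (\<lambda>i. (l * i) mod n)"])
      (use P Q RjA_back var_perm_mult_RjA[OF n lm] in \<open>auto simp: var_perm_Aset var_perm_inv Aset_vanish
        var_perm_add var_perm_smulA var_perm_homog zero_in_RjA\<close>)
qed

section \<open>The smash product A # C_n\<close>

text \<open>The automorphism of A # C_n extending var_perm n (\<lambda>i. (m * i) mod n) by \<sigma>^g \<mapsto> \<sigma>^(m*g)
  when l*m = 1 (mod n).\<close>
definition smash_perm :: "nat \<Rightarrow> nat \<Rightarrow> nat \<Rightarrow> (nat \<Rightarrow> (nat \<Rightarrow> nat) \<Rightarrow> 'k::field) \<Rightarrow> (nat \<Rightarrow> (nat \<Rightarrow> nat) \<Rightarrow> 'k)" where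
  "smash_perm n l m u = (\<lambda>k. if k < n then var_perm n (\<lambda>i. (m * i) mod n) (u ((l * k) mod n)) else 0)"

lemma smash_perm_add: "smash_perm n l m (u + v) = smash_perm n l m u + smash_perm n l m v"
  by (auto simp: smash_perm_def var_perm_add)

lemma smash_perm_zero: "smash_perm n l m 0 = 0"
  by (auto simp: smash_perm_def var_perm_zero)

lemma smash_perm_sum_list: "smash_perm n l m (sum_list xs) = sum_list (map (smash_perm n l m) xs)"
  by (induction xs) (simp_all only: sum_list.Nil sum_list.Cons list.map smash_perm_zero smash_perm_add)

lemma smash_perm_smulS: "smash_perm n l m (smulS c u) = smulS c (smash_perm n l m u)"
proof (intro ext)
  fix k x show "smash_perm n l m (smulS c u) k x = smulS c (smash_perm n l m u) k x"
    unfolding smash_perm_def smulS_def by (cases "k < n") (simp_all add: fun_cong[OF var_perm_smul])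
qed

lemma smash_perm_Sset:
  assumes P: "inv_perms n (\<lambda>i. (m * i) mod n) q" and u: "u \<in> Sset n"
  shows "smash_perm n l m u \<in> Sset n"
proof -
  have "smash_perm n l m u g \<in> Aset n" for g
  proof (cases "g < n")
    case True
    have "u ((l * g) mod n) \<in> Aset n" using u by (simp add: Sset_def)
    thus ?thesis using True var_perm_Aset[OF P] by (simp add: smash_perm_def)
  next
    case False thus ?thesis by (simp add: smash_perm_def Aset_def)
  qed
  thus ?thesis by (simp add: Sset_def smash_perm_def)
qed

lemma smash_perm_homogS: "inv_perms n (\<lambda>i. (m * i) mod n) q \<Longrightarrow> homogS n d u \<Longrightarrow> homogS n d (smash_perm n l m u)"
  by (auto simp: smash_perm_def homogS_def intro: var_perm_homog) (auto simp: homog_def)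

lemma smash_perm_inv:
  assumes n: "n \<ge> 1" and lm: "(l * m) mod n = 1"
    and u1: "\<forall>k c. c \<notin> mons n \<longrightarrow> u k c = 0" and u2: "\<forall>k\<ge>n. u k = 0"
  shows "smash_perm n m l (smash_perm n l m u) = u"
proof (rule ext)
  fix k
  have ml: "(m * l) mod n = 1" using lm by (simp add: mult.commute)
  have P: "inv_perms n (\<lambda>i. (m * i) mod n) (\<lambda>i. (l * i) mod n)" by (rule inv_perms_mult[OF lm n])
  show "smash_perm n m l (smash_perm n l m u) k = u k"
  proof (cases "k < n")
    case True
    have mk: "(m * k) mod n < n" using n by simp
    have "(l * ((m * k) mod n)) mod n = k" using mod_inverse_cancel_less[OF ml True] .
    thus ?thesis using True mk var_perm_inv[OF P, of "u k"] u1 by (simp add: smash_perm_def)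
  next
    case False thus ?thesis using u2 by (simp add: smash_perm_def)
  qed
qed

lemma smash_perm_eidem:
  fixes \<omega> :: "'k::field"
  assumes n: "n \<ge> 1" and w: "\<omega> ^ n = 1" and lm: "(l * m) mod n = 1"
  shows "smash_perm n l m (eidem n \<omega> \<alpha>) = eidem n \<omega> (l * \<alpha>)"
proof (rule ext)
  fix k
  have P: "inv_perms n (\<lambda>i. (m * i) mod n) (\<lambda>i. (l * i) mod n)" by (rule inv_perms_mult[OF lm n])
  show "smash_perm n l m (eidem n \<omega> \<alpha>) k = eidem n \<omega> (l * \<alpha>) k"
  proof (cases "k < n")
    case True
    have lk: "(l * k) mod n < n" using n by simp
    have e: "\<omega> ^ (\<alpha> * ((l * k) mod n)) = \<omega> ^ (l * \<alpha> * k)"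
      by (rule power_eq_if_mod_eq[OF w]) (simp add: mod_mult_right_eq algebra_simps)
    define C where "C = 1 / of_nat n * \<omega> ^ (l * \<alpha> * k)"
    have e1: "eidem n \<omega> \<alpha> ((l * k) mod n) = (\<lambda>m. C * oneA m)"
      using lk unfolding eidem_def C_def e by simp
    have e2: "eidem n \<omega> (l * \<alpha>) k = (\<lambda>m. C * oneA m)"
      using True unfolding eidem_def C_def by simp
    have "smash_perm n l m (eidem n \<omega> \<alpha>) k = var_perm n (\<lambda>i. (m * i) mod n) (\<lambda>m. C * oneA m)"
      using True e1 by (simp add: smash_perm_def)
    also have "\<dots> = (\<lambda>m. C * oneA m)" by (simp only: var_perm_smul var_perm_oneA[OF P])
    finally show ?thesis using e2 by simp
  next
    case False thus ?thesis by (simp add: smash_perm_def eidem_def zero_fun_def)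
  qed
qed

lemma smash_perm_smult:
  fixes u v :: "nat \<Rightarrow> (nat \<Rightarrow> nat) \<Rightarrow> 'k::field"
  assumes n: "n \<ge> 1" and lm: "(l * m) mod n = 1"
  shows "smash_perm n l m (smult n u v) = smult n (smash_perm n l m u) (smash_perm n l m v)"
proof (rule ext)
  fix k
  define p where "p = (\<lambda>i. (m * i) mod n)"
  define q where "q = (\<lambda>i. (l * i) mod n)"
  have P: "inv_perms n p q" unfolding p_def q_def by (rule inv_perms_mult[OF lm n])
  have Q: "inv_perms n q p" by (rule inv_perms_sym[OF P])
  show "smash_perm n l m (smult n u v) k = smult n (smash_perm n l m u) (smash_perm n l m v) k"
  proof (cases "k < n")
    case False thus ?thesis by (simp add: smash_perm_def smult_def zero_fun_def)
  next
    case k: True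
    define K where "K = q k"
    have K: "K < n" using n by (simp add: K_def q_def)
    define G where "G = (\<lambda>g. amult n (var_perm n p (u g)) (var_perm n (\<lambda>i. p ((i + g) mod n)) (v ((K + n - g) mod n))))"
    have "smash_perm n l m (smult n u v) k = var_perm n p (\<Sum>g<n. amult n (u g) ((asigma n ^^ g) (v ((K + n - g) mod n))))"
      using k K by (simp add: smash_perm_def smult_def K_def p_def q_def)
    also have "\<dots> = (\<Sum>g<n. G g)"
      by (simp add: var_perm_sum var_perm_amult[OF P] var_perm_asigma_pow[OF n P] G_def)
    also have "\<dots> = (\<Sum>h<n. G (q h))"
      by (rule sum.reindex_bij_betw[OF inv_perms_bij[OF Q], symmetric])
    also have "\<dots> = (\<Sum>h<n. amult n (smash_perm n l m u h) ((asigma n ^^ h) (smash_perm n l m v ((k + n - h) mod n))))"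
    proof (intro sum.cong refl)
      fix h assume h: "h \<in> {..<n}"
      have c1: "\<forall>i<n. p ((i + q h) mod n) = (p i + h) mod n"
        unfolding p_def q_def using mod_inverse_mult_add[OF lm] by simp
      have c2: "(K + n - q h) mod n = q ((k + n - h) mod n)"
        unfolding K_def q_def using mult_mod_diff[of h n l k] h by simp
      have kh: "(k + n - h) mod n < n" using n by simp
      have hn: "h < n" using h by simp
      have smash_perm_eq: "\<And>w j. j < n \<Longrightarrow> smash_perm n l m w j = var_perm n p (w (q j))"
        by (simp add: smash_perm_def p_def q_def)
      show "G (q h) = amult n (smash_perm n l m u h) ((asigma n ^^ h) (smash_perm n l m v ((k + n - h) mod n)))"
        unfolding G_def smash_perm_eq[OF hn] smash_perm_eq[OF kh] asigma_pow_var_perm[OF n P] fun_cong[OF var_perm_cong[OF c1]] c2 ..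
    qed
    also have "\<dots> = smult n (smash_perm n l m u) (smash_perm n l m v) k" by (simp only: smult_def k if_True)
    finally show ?thesis .
  qed
qed

lemma sum_fun_apply: "(sum F S) x = (\<Sum>s\<in>S. F s x)"
  by (induction S rule: infinite_finite_induct) auto

lemma smult_vanish:
  "c \<notin> mons n \<Longrightarrow> smult n a b k c = 0" "k \<ge> n \<Longrightarrow> smult n a b k = 0"
  by (auto simp: smult_def sum_fun_apply amult_def)

lemma smash_perm_Ie0:
  fixes \<omega> :: "'k::field"
  assumes n: "n \<ge> 1" and w: "\<omega> ^ n = 1" and lm: "(l * m) mod n = 1"
    and x: "x \<in> Ie0 n \<omega>"
  shows "smash_perm n l m x \<in> Ie0 n \<omega>"
proof -
  have P: "inv_perms n (\<lambda>i. (m * i) mod n) (\<lambda>i. (l * i) mod n)" by (rule inv_perms_mult[OF lm n])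
  define F where "F = (\<lambda>(u, v). smult n (smult n u (eidem n \<omega> 0)) v)"
  obtain ps where x: "x = sum_list (map F ps)" and ps: "set ps \<subseteq> Sset n \<times> Sset n"
    using x by (auto simp: Ie0_def F_def)
  have e0: "smash_perm n l m (eidem n \<omega> 0) = eidem n \<omega> 0"
    using smash_perm_eidem[OF n w lm, of 0] by simp
  have FP: "smash_perm n l m (F uv) = F ((\<lambda>(u, v). (smash_perm n l m u, smash_perm n l m v)) uv)" for uv
    by (cases uv) (simp add: F_def smash_perm_smult[OF n lm] e0)
  have "smash_perm n l m x = sum_list (map F (map (\<lambda>(u, v). (smash_perm n l m u, smash_perm n l m v)) ps))"
    unfolding x smash_perm_sum_list map_map o_def FP ..
  moreover have "set (map (\<lambda>(u, v). (smash_perm n l m u, smash_perm n l m v)) ps) \<subseteq> Sset n \<times> Sset n"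
    using ps smash_perm_Sset[OF P] by fastforce
  ultimately show ?thesis unfolding Ie0_def F_def by blast
qed

lemma eidem_mod_eq:
  assumes "(\<omega>::'k::field) ^ n = 1" and "a mod n = b mod n"
  shows "eidem n \<omega> a = eidem n \<omega> b"
proof -
  have "\<omega> ^ (a * g) = \<omega> ^ (b * g)" for g
    using assms by (intro power_eq_if_mod_eq[of \<omega> n]) (metis mod_mult_left_eq)+
  then show ?thesis unfolding eidem_def by (intro ext) (simp only:)
qed

lemma smash_perm_eS:
  fixes \<omega> :: "'k::field"
  assumes n: "n \<ge> 1" and w: "\<omega> ^ n = 1" and lm: "(l * m) mod n = 1" and x: "x \<in> eS n \<omega> j"
  shows "smash_perm n l m x \<in> eS n \<omega> (l * j)"
proof -
  obtain u where u: "u \<in> Sset n" and xu: "x = smult n (eidem n \<omega> j) u"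
    using x by (auto simp: eS_def)
  show ?thesis
    unfolding xu smash_perm_smult[OF n lm] smash_perm_eidem[OF n w lm] eS_def
    using smash_perm_Sset[OF inv_perms_mult[OF lm n] u] by blast
qed

lemma zero_in_Ie0: "0 \<in> Ie0 n \<omega>"
  unfolding Ie0_def by (rule CollectI, rule exI[of _ "[]"]) simp

lemma graded_quot_iso_eS:
  fixes \<omega> :: "'k::field"
  assumes n: "n \<ge> 1" and w: "\<omega> ^ n = 1" and lm: "(l * m) mod n = 1"
  shows "graded_quot_iso (homogS n) smulS (eS n \<omega> j) (Ie0 n \<omega>) (eS n \<omega> (l * j)) (Ie0 n \<omega>)"
proof -
  have ml: "(m * l) mod n = 1" using lm by (simp add: mult.commute)
  have eS_back: "smash_perm n m l y \<in> eS n \<omega> j" if "y \<in> eS n \<omega> (l * j)" for y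
    using smash_perm_eS[OF n w ml that] eidem_mod_eq[OF w, of "m * (l * j)" j] mod_inverse_cancel[OF lm]
    by (simp add: eS_def mod_mult_right_eq)
  have inverse_lm: "smash_perm n m l (smash_perm n l m x) = x" if "x \<in> eS n \<omega> j'" for x j'
    using that by (auto simp: eS_def smult_vanish intro!: smash_perm_inv[OF n lm])
  have inverse_ml: "smash_perm n l m (smash_perm n m l y) = y" if "y \<in> eS n \<omega> j'" for y j'
    using that by (auto simp: eS_def smult_vanish intro!: smash_perm_inv[OF n ml])
  show ?thesis
    by (rule graded_quot_iso_of_inverse[where \<phi> = "smash_perm n l m" and \<psi> = "smash_perm n m l"])
      (use eS_back smash_perm_eS[OF n w lm] inverse_lm inverse_ml
        smash_perm_Ie0[OF n w lm] smash_perm_Ie0[OF n w ml] inv_perms_mult[OF lm n] in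
        \<open>auto simp: smash_perm_add smash_perm_smulS smash_perm_homogS zero_in_Ie0\<close>)
qed

theorem lemma3p4:
  fixes \<omega> :: "'k::field_char_0" and n lam j :: nat
  assumes "alg_closed TYPE('k)"
    and "n \<ge> 2"
    and "\<omega> ^ n = 1" and "\<forall>m. 0 < m \<and> m < n \<longrightarrow> \<omega> ^ m \<noteq> 1"
    and "lam > 0" and "gcd lam n = 1"
    and "1 \<le> j" and "j \<le> n - 1"
  shows "graded_quot_iso (homog n) smulA (Aset n) (RjA n \<omega> j) (Aset n) (RjA n \<omega> (lam * j))
       \<and> graded_quot_iso (homogS n) smulS (eS n \<omega> j) (Ie0 n \<omega>) (eS n \<omega> (lam * j)) (Ie0 n \<omega>)
       \<and> (prime n \<longrightarrow> (\<forall>i. 2 \<le> i \<and> i \<le> n - 1 \<longrightarrow>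
            graded_quot_iso (homogS n) smulS (eS n \<omega> 1) (Ie0 n \<omega>) (eS n \<omega> i) (Ie0 n \<omega>)))"
proof -
  have n: "n \<ge> 1" using assms(2) by simp
  obtain m where m: "(lam * m) mod n = 1" by (rule mod_inverse_exists[OF assms(6,2)])
  have prime_case: "graded_quot_iso (homogS n) smulS (eS n \<omega> 1) (Ie0 n \<omega>) (eS n \<omega> i) (Ie0 n \<omega>)"
    if "prime n" and i: "2 \<le> i" "i \<le> n - 1" for i
  proof -
    have "\<not> n dvd i" using i assms(2) by (intro nat_dvd_not_less) auto
    then have "coprime i n" using prime_imp_coprime[OF \<open>prime n\<close>] by (simp add: coprime_commute)
    then obtain m' where "(i * m') mod n = 1"
      using mod_inverse_exists[OF _ assms(2)] by (metis coprime_iff_gcd_eq_1)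
    then show ?thesis using graded_quot_iso_eS[OF n assms(3), of i m' 1] by simp
  qed
  show ?thesis
    using graded_quot_iso_RjA[OF n assms(3) m] graded_quot_iso_eS[OF n assms(3) m] prime_case by blast
qed

end
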